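(* Let $A$ be a finite abelian group and $H$ a subgroup of $A$. Then $\Gamma_{A,H}$ admits a total perfect code if and only if, up to isomorphism (of $A$ carrying $H$ to the indicated subgroup), one of the following holds: (1) $A=\mathbb{Z}_2^n\times Q$ and $|H|=2$, where $n\ge 1$ and $Q$ is an abelian group of odd order; (2) $A=\mathbb{Z}_2^n\times\mathbb{Z}_{2^{k_1}}\times\cdots\times\mathbb{Z}_{2^{k_t}}\times Q$ with $n\ge1$, $t\ge 1$, $k_j\ge 2$ for all $j$, $Q$ an abelian group of odd order, and $H=\{0,(x_1,\dots,x_n,z_1,\dots,z_t,0)\}$ where each $x_i\in\{0,1\}$, each $z_j\in\{0,2^{k_j-1}\}$, and $x_l=1$ for at least one $l\in\{1,\dots,n\}$; (3) $A=\mathbb{Z}_2^n\times\mathbb{Z}_3$ with $n\ge 0$ and $H=\{0\}^n\times\mathbb{Z}_3=\{(0,\dots,0,0),(0,\dots,0,1),(0,\dots,0,2)\}$.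
   Context: Abelian groups are written additively with identity $0$. For a subgroup $H$ of a finite abelian group $A$, the subgroup sum graph $\Gamma_{A,H}$ is the simple undirected graph with vertex set $A$ in which distinct vertices $x,y$ are adjacent if and only if $x+y\in H\setminus\{0\}$. A total perfect code in a graph is a set $C$ of vertices such that every vertex of the graph (whether in $C$ or not) has exactly one neighbour in $C$. (The paper prints $z_j\in\{0,2^{k_j-2}\}$ in (2), which is a misprint: $H$ must be a subgroup of order $2$, forcing $z_j\in\{0,2^{k_j-1}\}$.) *)

theory Defs
  imports Main
begin

text \<open>A finite abelian group is modelled as a type of class finite and ab_group_add
  (the group is the whole type, written additively).\<close>

definition is_subgroup :: "'a::ab_group_add set \<Rightarrow> bool" where
  "is_subgroup H \<longleftrightarrow> 0 \<in> H \<and> (\<forall>x\<in>H. \<forall>y\<in>H. x + y \<in> H) \<and> (\<forall>x\<in>H. - x \<in> H)"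

definition ssg_adj :: "'a::ab_group_add set \<Rightarrow> 'a \<Rightarrow> 'a \<Rightarrow> bool" where
  "ssg_adj H x y \<longleftrightarrow> x \<noteq> y \<and> x + y \<in> H - {0}"

definition total_perfect_code :: "'a::ab_group_add set \<Rightarrow> 'a set \<Rightarrow> bool" where
  "total_perfect_code H C \<longleftrightarrow> (\<forall>v. \<exists>!c. c \<in> C \<and> ssg_adj H v c)"

text \<open>Concrete model of Z_{m_1} x ... x Z_{m_r}: lists of residues.\<close>
definition zvecs :: "nat list \<Rightarrow> nat list set" where
  "zvecs ms = {xs. length xs = length ms \<and> (\<forall>i<length ms. xs ! i < ms ! i)}"

definition zadd :: "nat list \<Rightarrow> nat list \<Rightarrow> nat list \<Rightarrow> nat list" where
  "zadd ms xs ys = map (\<lambda>i. (xs ! i + ys ! i) mod (ms ! i)) [0..<length ms]"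

text \<open>prod_iso ms Q \<phi>: the map (xs, q) \<mapsto> \<phi> xs + q is a group isomorphism from
  Z_{ms} x Q onto the whole group A, where Q is a subgroup of A (playing the role of the
  abstract factor Q, which is determined up to isomorphism).\<close>
definition prod_iso :: "nat list \<Rightarrow> 'a::ab_group_add set \<Rightarrow> (nat list \<Rightarrow> 'a) \<Rightarrow> bool" where
  "prod_iso ms Q \<phi> \<longleftrightarrow> is_subgroup Q
     \<and> (\<forall>xs\<in>zvecs ms. \<forall>ys\<in>zvecs ms. \<phi> (zadd ms xs ys) = \<phi> xs + \<phi> ys)
     \<and> bij_betw (\<lambda>(xs, q). \<phi> xs + q) (zvecs ms \<times> Q) UNIV"

end

theory Submission
  imports Defs "HOL-Library.Set_Algebras" "HOL-Computational_Algebra.Primes"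
begin

text \<open>
  A total perfect code \<open>C\<close> contains \<open>0\<close> and exactly one nonzero element \<open>c\<close> of \<open>H\<close>, which forces
  \<open>H = {0, c, -c}\<close>. If \<open>|H| = 2\<close>, say \<open>H = {0, h}\<close>, a code exists iff \<open>h\<close> is not a double
  \<open>2v\<close> (and then \<open>C = A\<close> works). If \<open>|H| = 3\<close>, a parity argument on the triangle \<open>u, u + h, u - h\<close>
  shows that all doubles lie in \<open>H\<close>; conversely then \<open>{u. 2u \<in> {0, 2h}}\<close> is a code.
  Both conditions are then read off a decomposition of \<open>A\<close> into its odd part and cyclic
  \<open>2\<close>-power factors: an involution that is not a double has coordinate \<open>1\<close> in some factor \<open>\<int>\<^sub>2\<close>
  (cases (1) and (2)), while "all doubles lie in \<open>H\<close>" forces \<open>A = \<int>\<^sub>2\<^sup>n \<oplus> H\<close> (case (3)).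
\<close>

fun nsmul :: "nat \<Rightarrow> 'a::monoid_add \<Rightarrow> 'a" where
  "nsmul 0 x = 0"
| "nsmul (Suc n) x = x + nsmul n x"

lemma nsmul_add: "nsmul (m + n) x = nsmul m x + nsmul n x"
  by (induct m) (simp_all add: add.assoc)

lemma nsmul_mult: "nsmul (m * n) x = nsmul n (nsmul m x)"
  by (induct n) (simp_all add: nsmul_add add.commute)

lemma nsmul_zero [simp]: "nsmul n 0 = 0"
  by (induct n) simp_all

lemma nsmul_1 [simp]: "nsmul 1 x = x"
  by (simp add: One_nat_def)

lemma nsmul_two: "nsmul 2 x = x + x"
  by (simp add: numeral_2_eq_2)

lemma nsmul_add_distrib: "nsmul n (x + y) = nsmul n x + nsmul n (y::'a::comm_monoid_add)"
  by (induct n) (simp_all add: algebra_simps)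

lemma nsmul_minus: "nsmul n (- x) = - nsmul n (x::'a::ab_group_add)"
  by (induct n) (simp_all add: algebra_simps)

lemma nsmul_mod: "nsmul m x = 0 \<Longrightarrow> nsmul (a mod m) x = nsmul a x"
  by (metis div_mult_mod_eq add_0 nsmul_add nsmul_mult nsmul_zero mult.commute)

lemma nsmul_eq_0_dvd: "d dvd n \<Longrightarrow> nsmul d x = 0 \<Longrightarrow> nsmul n x = 0"
  by (metis dvd_def nsmul_mult nsmul_zero mult.commute)

lemma nsmul_gcd_eq_0:
  fixes x :: "'a::ab_group_add"
  assumes "nsmul r x = 0" "nsmul s x = 0"
  shows "nsmul (gcd r s) x = 0"
proof (cases "r = 0")
  case False
  then obtain a b where "r * a = s * b + gcd r s" using bezout_nat by blast
  then have "nsmul (r * a) x = nsmul (s * b) x + nsmul (gcd r s) x" by (simp add: nsmul_add)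
  then show ?thesis using assms by (simp add: nsmul_mult)
qed (use assms in simp)

lemma exists_nsmul_eq_0: "\<exists>n>0. nsmul n (x::'a::{finite,ab_group_add}) = 0"
proof -
  have "\<not> inj (\<lambda>n. nsmul n x)"
    using finite_imageD infinite_UNIV_nat finite by blast
  then obtain i j where "i < j" "nsmul i x = nsmul j x"
    unfolding inj_def by (metis linorder_neqE_nat)
  then have "nsmul (j - i) x + nsmul i x = nsmul i x"
    by (metis nsmul_add le_add_diff_inverse2 less_imp_le)
  then show ?thesis
    using \<open>i < j\<close> by (intro exI[of _ "j - i"]) simp
qed

lemma prime_power_dvd_if_nsmul_eq_0:
  fixes x :: "'a::ab_group_add"
  assumes p: "prime p" and pk: "nsmul (p ^ k) x = 0" and pk1: "nsmul (p ^ (k - 1)) x \<noteq> 0"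
    and j: "nsmul j x = 0"
  shows "p ^ k dvd j"
proof -
  obtain i where i: "i \<le> k" "gcd j (p ^ k) = p ^ i"
    using divides_primepow_nat[OF p, of "gcd j (p ^ k)" k] by auto
  have "nsmul (p ^ i) x = 0"
    using nsmul_gcd_eq_0[OF j pk] i by simp
  then have "\<not> i \<le> k - 1"
    using pk1 nsmul_eq_0_dvd le_imp_power_dvd by blast
  then have "i = k" using i by simp
  then show ?thesis by (metis i(2) gcd_dvd1)
qed

lemma is_subgroup_nsmul: "is_subgroup H \<Longrightarrow> x \<in> H \<Longrightarrow> nsmul n x \<in> H"
  by (induct n) (auto simp: is_subgroup_def)

lemma is_subgroup_diff: "is_subgroup H \<Longrightarrow> x \<in> H \<Longrightarrow> y \<in> H \<Longrightarrow> x - y \<in> H"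
  unfolding is_subgroup_def by (metis diff_conv_add_uminus)

lemma is_subgroup_zero: "is_subgroup {0}"
  by (simp add: is_subgroup_def)

lemma is_subgroup_set_plus:
  assumes A: "is_subgroup A" and B: "is_subgroup B"
  shows "is_subgroup (A + B)"
  unfolding is_subgroup_def
proof (intro conjI ballI)
  show "0 \<in> A + B"
    using A B unfolding is_subgroup_def by (metis add_0 set_plus_intro)
next
  fix x y assume "x \<in> A + B" "y \<in> A + B"
  then obtain a1 b1 a2 b2 where "x = a1 + b1" "y = a2 + b2" "a1 \<in> A" "a2 \<in> A" "b1 \<in> B" "b2 \<in> B"
    by (auto elim!: set_plus_elim)
  moreover have "a1 + b1 + (a2 + b2) = (a1 + a2) + (b1 + b2)" by (simp add: algebra_simps)
  ultimately show "x + y \<in> A + B"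
    using A B unfolding is_subgroup_def by (metis set_plus_intro)
next
  fix x assume "x \<in> A + B"
  then obtain a b where "x = a + b" "a \<in> A" "b \<in> B" by (auto elim!: set_plus_elim)
  then show "- x \<in> A + B"
    using A B unfolding is_subgroup_def by (metis minus_add_distrib add.commute set_plus_intro)
qed

lemma is_subgroup_Un_coset:
  assumes L: "is_subgroup L" and c: "c + c \<in> L"
  shows "is_subgroup (L \<union> c +o L)"
proof -
  have add: "x + y \<in> L" if "x \<in> L" "y \<in> L" for x y
    using L that unfolding is_subgroup_def by auto
  have neg: "- x \<in> L" if "x \<in> L" for x
    using L that unfolding is_subgroup_def by auto
  show ?thesis
    unfolding is_subgroup_def
  proof (intro conjI ballI)
    show "0 \<in> L \<union> c +o L" using L unfolding is_subgroup_def by simp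
  next
    fix x y assume x: "x \<in> L \<union> c +o L" and y: "y \<in> L \<union> c +o L"
    then consider "x \<in> L" "y \<in> L"
      | x' where "x' \<in> L" "y \<in> L" "x + y = c + (x' + y)"
      | y' where "x \<in> L" "y' \<in> L" "x + y = c + (x + y')"
      | x' y' where "x' \<in> L" "y' \<in> L" "x + y = (c + c) + (x' + y')"
      unfolding elt_set_plus_def by (auto simp: algebra_simps)
    then show "x + y \<in> L \<union> c +o L"
      by cases (use add c in \<open>auto simp: elt_set_plus_def\<close>)
  next
    fix x assume "x \<in> L \<union> c +o L"
    then consider "x \<in> L" | x' where "x' \<in> L" "- x = c + (- (c + c) + - x')"
      unfolding elt_set_plus_def by (auto simp: algebra_simps)
    then show "- x \<in> L \<union> c +o L"
    proof cases
      case (2 x')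
      then have "- (c + c) + - x' \<in> L" using add neg c by blast
      with 2 show ?thesis unfolding elt_set_plus_def by blast
    qed (use neg in blast)
  qed
qed

definition cyclic_subgroup :: "'a::monoid_add \<Rightarrow> 'a set" where
  "cyclic_subgroup g = range (\<lambda>j. nsmul j g)"

lemma is_subgroup_cyclic_subgroup: "is_subgroup (cyclic_subgroup (g::'a::{finite,ab_group_add}))"
proof -
  obtain m where m: "m > 0" "nsmul m g = 0" using exists_nsmul_eq_0 by blast
  have "- nsmul j g = nsmul ((m - 1) * j) g" for j
  proof -
    have "nsmul ((m - 1) * j) g + nsmul j g = nsmul (m * j) g"
      using m(1) by (simp flip: nsmul_add add: algebra_simps)
    also have "\<dots> = 0" using m(2) by (simp add: nsmul_mult)
    finally show ?thesis by (simp add: add_eq_0_iff2)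
  qed
  then show ?thesis
    unfolding is_subgroup_def cyclic_subgroup_def
    by (auto simp flip: nsmul_add) (metis nsmul.simps(1) rangeI)
qed

lemma generator_in_cyclic_subgroup: "g \<in> cyclic_subgroup g"
  unfolding cyclic_subgroup_def by (metis add_0_right nsmul.simps rangeI)

lemma even_card_fixpoint_free_involution:
  assumes "finite S" "\<forall>x\<in>S. f x \<in> S \<and> f (f x) = x \<and> f x \<noteq> x"
  shows "even (card S)"
  using assms
proof (induction "card S" arbitrary: S rule: less_induct)
  case less
  show ?case
  proof (cases "S = {}")
    case False
    then obtain x where x: "x \<in> S" by blast
    have fx: "f x \<in> S" "f x \<noteq> x" "f (f x) = x" using less.prems(2) x by auto
    define S' where "S' = S - {x, f x}"
    have "\<forall>y\<in>S'. f y \<in> S' \<and> f (f y) = y \<and> f y \<noteq> y"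
    proof
      fix y assume y: "y \<in> S'"
      then have "f y \<in> S" "f (f y) = y" "f y \<noteq> y" using less.prems(2) unfolding S'_def by auto
      moreover have "f y \<noteq> x" "f y \<noteq> f x" using y fx \<open>f (f y) = y\<close> unfolding S'_def by auto
      ultimately show "f y \<in> S' \<and> f (f y) = y \<and> f y \<noteq> y" unfolding S'_def by simp
    qed
    moreover have card: "card S = card S' + 2"
    proof -
      have sub: "{x, f x} \<subseteq> S" using x fx by auto
      then have "card {x, f x} \<le> card S" by (rule card_mono[OF less.prems(1)])
      then show ?thesis unfolding S'_def using sub less.prems(1) fx(2)
        by (simp add: card_Diff_subset)
    qed
    moreover have "finite S'" unfolding S'_def using less.prems(1) by simp
    ultimately have "even (card S')" using less.hyps[of S'] by simp
    then show ?thesis using card by simp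
  qed simp
qed

lemma even_card_subgroup_if_order_two:
  assumes Q: "is_subgroup (Q::'a::{finite,ab_group_add} set)" and h: "h \<in> Q" "h \<noteq> 0" "h + h = 0"
  shows "even (card Q)"
proof (rule even_card_fixpoint_free_involution[where f = "\<lambda>x. x + h"])
  show "\<forall>x\<in>Q. x + h \<in> Q \<and> x + h + h = x \<and> x + h \<noteq> x"
    using Q h unfolding is_subgroup_def by (simp add: add.assoc)
qed simp

lemma bij_betw_set_plus:
  assumes A: "is_subgroup A" and B: "is_subgroup B" and AB: "A \<inter> B = {0}"
  shows "bij_betw (\<lambda>(a, b). a + b) (A \<times> B) (A + B)"
proof -
  have "a1 = a2 \<and> b1 = b2"
    if "a1 \<in> A" "a2 \<in> A" "b1 \<in> B" "b2 \<in> B" "a1 + b1 = a2 + b2" for a1 a2 b1 b2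
  proof -
    have "a1 - a2 = b2 - b1" using that(5) by (simp add: algebra_simps)
    moreover have "a1 - a2 \<in> A" "b2 - b1 \<in> B"
      using is_subgroup_diff A B that(1-4) by blast+
    ultimately have "a1 - a2 \<in> A \<inter> B" by simp
    then show ?thesis using AB that(5) by simp
  qed
  then show ?thesis
    unfolding bij_betw_def inj_on_def set_plus_image by auto
qed

lemma zvecs_Nil: "zvecs [] = {[]}"
  unfolding zvecs_def by auto

lemma zvecs_single: "zvecs [m] = {[j] | j. j < m}"
  unfolding zvecs_def by (auto simp: length_Suc_conv)

lemma length_zvecs: "xs \<in> zvecs ms \<Longrightarrow> length xs = length ms"
  unfolding zvecs_def by simp

lemma nth_zvecs_less: "xs \<in> zvecs ms \<Longrightarrow> i < length ms \<Longrightarrow> xs ! i < ms ! i"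
  unfolding zvecs_def by simp

lemma replicate_0_in_zvecs: "(\<forall>m\<in>set ms. 0 < m) \<Longrightarrow> replicate (length ms) 0 \<in> zvecs ms"
  unfolding zvecs_def by auto

lemma zvecs_list_all2: "zvecs ms = {xs. list_all2 (<) xs ms}"
  unfolding zvecs_def list_all2_conv_all_nth by auto

lemma append_in_zvecs_iff:
  "length xs = length ms1 \<Longrightarrow> xs @ ys \<in> zvecs (ms1 @ ms2) \<longleftrightarrow> xs \<in> zvecs ms1 \<and> ys \<in> zvecs ms2"
  unfolding zvecs_list_all2 by (simp add: list_all2_append)

lemma zvecs_replicate_two: "xs \<in> zvecs (replicate n 2) \<longleftrightarrow> length xs = n \<and> set xs \<subseteq> {0, 1}"
proof -
  have "x \<in> {0, 1} \<longleftrightarrow> x < (2::nat)" for x by auto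
  then have "set xs \<subseteq> {0, 1} \<longleftrightarrow> (\<forall>x\<in>set xs. x < 2)" by blast
  then have "set xs \<subseteq> {0, 1} \<longleftrightarrow> (\<forall>i<length xs. xs ! i < 2)" by (simp only: all_set_conv_all_nth)
  then show ?thesis unfolding zvecs_def by auto
qed

lemma bij_betw_append_zvecs:
  "bij_betw (\<lambda>(xs, ys). xs @ ys) (zvecs ms1 \<times> zvecs ms2) (zvecs (ms1 @ ms2))"
  unfolding bij_betw_def
proof
  show "inj_on (\<lambda>(xs, ys). xs @ ys) (zvecs ms1 \<times> zvecs ms2)"
    by (rule inj_onI) (auto simp: length_zvecs)
  have "xs \<in> (\<lambda>(xs, ys). xs @ ys) ` (zvecs ms1 \<times> zvecs ms2)" if xs: "xs \<in> zvecs (ms1 @ ms2)" for xs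
  proof -
    have "length (take (length ms1) xs) = length ms1" using length_zvecs[OF xs] by simp
    then have "take (length ms1) xs \<in> zvecs ms1" "drop (length ms1) xs \<in> zvecs ms2"
      using append_in_zvecs_iff xs by (metis append_take_drop_id)+
    then show ?thesis by (intro image_eqI[of _ _ "(take (length ms1) xs, drop (length ms1) xs)"]) auto
  qed
  then show "(\<lambda>(xs, ys). xs @ ys) ` (zvecs ms1 \<times> zvecs ms2) = zvecs (ms1 @ ms2)"
    by (auto simp: length_zvecs append_in_zvecs_iff)
qed

definition lincomb :: "'a::comm_monoid_add list \<Rightarrow> nat list \<Rightarrow> 'a" where
  "lincomb gs xs = (\<Sum>i<length gs. nsmul (xs ! i) (gs ! i))"

definition is_basis :: "'a::comm_monoid_add list \<Rightarrow> nat list \<Rightarrow> 'a set \<Rightarrow> bool" where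
  "is_basis gs ms G \<longleftrightarrow> length gs = length ms \<and> (\<forall>i<length ms. nsmul (ms ! i) (gs ! i) = 0)
     \<and> bij_betw (lincomb gs) (zvecs ms) G"

lemma lincomb_append:
  assumes "length xs = length gs"
  shows "lincomb (gs @ hs) (xs @ ys) = lincomb gs xs + lincomb hs ys"
proof -
  let ?f = "\<lambda>i. nsmul ((xs @ ys) ! i) ((gs @ hs) ! i)"
  let ?n = "length gs" and ?m = "length hs"
  have "lincomb (gs @ hs) (xs @ ys) = sum ?f {0..<?n + ?m}"
    unfolding lincomb_def by (simp add: lessThan_atLeast0)
  also have "\<dots> = sum ?f {0..<?n} + sum ?f {?n..<?n + ?m}"
    by (rule sum.atLeastLessThan_concat[symmetric]) auto
  also have "sum ?f {0..<?n} = lincomb gs xs"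
    unfolding lincomb_def lessThan_atLeast0 using assms by (intro sum.cong) (auto simp: nth_append)
  also have "sum ?f {?n..<?n + ?m} = sum (\<lambda>i. ?f (i + ?n)) {0..<?m}"
    using sum.shift_bounds_nat_ivl[of ?f 0 ?n ?m] by (simp add: add.commute)
  also have "\<dots> = lincomb hs ys"
    unfolding lincomb_def lessThan_atLeast0 using assms by (intro sum.cong) (auto simp: nth_append)
  finally show ?thesis .
qed

lemma lincomb_single: "lincomb [g] [j] = nsmul j g"
  unfolding lincomb_def by simp

lemma lincomb_replicate_0:
  assumes "length gs \<le> n"
  shows "lincomb gs (replicate n 0) = 0"
proof -
  have "nsmul (replicate n 0 ! i) (gs ! i) = 0" if "i < length gs" for i
    using that assms by simp
  then show ?thesis unfolding lincomb_def by simp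
qed

lemma zadd_nth: "i < length ms \<Longrightarrow> zadd ms xs ys ! i = (xs ! i + ys ! i) mod (ms ! i)"
  unfolding zadd_def by simp

lemma length_zadd [simp]: "length (zadd ms xs ys) = length ms"
  unfolding zadd_def by simp

lemma zadd_in_zvecs:
  assumes "\<forall>m\<in>set ms. 0 < m"
  shows "zadd ms xs ys \<in> zvecs ms"
  unfolding zvecs_def using assms by (simp add: zadd_nth)

lemma lincomb_zadd:
  assumes "length gs = length ms" "\<forall>i<length ms. nsmul (ms ! i) (gs ! i) = 0"
  shows "lincomb gs (zadd ms xs ys) = lincomb gs xs + lincomb gs ys"
proof -
  have "nsmul (zadd ms xs ys ! i) (gs ! i) = nsmul (xs ! i) (gs ! i) + nsmul (ys ! i) (gs ! i)"
    if "i < length gs" for i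
    using assms that by (simp add: zadd_nth nsmul_mod nsmul_add)
  then show ?thesis unfolding lincomb_def by (simp add: sum.distrib)
qed

lemma basis_surj: "is_basis gs ms G \<Longrightarrow> x \<in> G \<Longrightarrow> \<exists>xs\<in>zvecs ms. x = lincomb gs xs"
  unfolding is_basis_def bij_betw_def by blast

lemma basis_inj:
  "is_basis gs ms G \<Longrightarrow> xs \<in> zvecs ms \<Longrightarrow> ys \<in> zvecs ms \<Longrightarrow> lincomb gs xs = lincomb gs ys \<Longrightarrow> xs = ys"
  unfolding is_basis_def bij_betw_def inj_on_def by blast

lemma basis_Nil: "is_basis [] [] {0}"
  unfolding is_basis_def bij_betw_def zvecs_Nil by (simp add: lincomb_def)

lemma basis_single:
  assumes "0 < m" and m: "nsmul m g = 0" and ord: "\<And>j. 0 < j \<Longrightarrow> j < m \<Longrightarrow> nsmul j g \<noteq> (0::'a::ab_group_add)"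
  shows "is_basis [g] [m] (cyclic_subgroup g)"
proof -
  have "i = j" if ij: "i < m" "j < m" "nsmul i g = nsmul j g" for i j
  proof (rule ccontr)
    have diff: "nsmul (i' - j') g = 0" if "j' < i'" "nsmul i' g = nsmul j' g" for i' j'
      using that nsmul_add[of "i' - j'" j' g] by simp
    assume "i \<noteq> j"
    then consider "j < i" | "i < j" by linarith
    then show False
      by cases (use ij diff ord in \<open>metis less_imp_diff_less zero_less_diff\<close>)+
  qed
  then have inj: "inj_on (lincomb [g]) (zvecs [m])"
    unfolding zvecs_single by (auto intro!: inj_onI simp: lincomb_single)
  have "nsmul j g \<in> lincomb [g] ` zvecs [m]" for j
  proof
    show "nsmul j g = lincomb [g] [j mod m]" using nsmul_mod[OF m] by (simp add: lincomb_single)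
    show "[j mod m] \<in> zvecs [m]" unfolding zvecs_single using \<open>0 < m\<close> by simp
  qed
  then have "lincomb [g] ` zvecs [m] = cyclic_subgroup g"
    unfolding cyclic_subgroup_def zvecs_single by (force simp: lincomb_single)
  moreover have "\<forall>i<length [m]. nsmul ([m] ! i) ([g] ! i) = 0" using m by simp
  ultimately show ?thesis
    unfolding is_basis_def bij_betw_def using inj by simp
qed

lemma basis_append:
  assumes B1: "is_basis gs1 ms1 G1" and B2: "is_basis gs2 ms2 G2"
    and G: "is_subgroup G1" "is_subgroup G2" "G1 \<inter> G2 = {0}"
  shows "is_basis (gs1 @ gs2) (ms1 @ ms2) (G1 + G2)"
proof -
  have len: "length gs1 = length ms1" "length gs2 = length ms2"
    using B1 B2 unfolding is_basis_def by auto
  have "nsmul ((ms1 @ ms2) ! i) ((gs1 @ gs2) ! i) = 0" if "i < length (ms1 @ ms2)" for i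
  proof (cases "i < length ms1")
    case False
    then have "i - length ms1 < length ms2" using that by simp
    then show ?thesis using B2 False len unfolding is_basis_def by (simp add: nth_append)
  qed (use B1 len in \<open>simp add: nth_append is_basis_def\<close>)
  moreover have "bij_betw (map_prod (lincomb gs1) (lincomb gs2)) (zvecs ms1 \<times> zvecs ms2) (G1 \<times> G2)"
    using B1 B2 unfolding is_basis_def by (intro bij_betw_map_prod) simp_all
  then have "bij_betw ((\<lambda>(a, b). a + b) \<circ> map_prod (lincomb gs1) (lincomb gs2))
      (zvecs ms1 \<times> zvecs ms2) (G1 + G2)"
    using bij_betw_set_plus[OF G] by (rule bij_betw_trans)
  then have "bij_betw (lincomb (gs1 @ gs2) \<circ> (\<lambda>(xs, ys). xs @ ys)) (zvecs ms1 \<times> zvecs ms2) (G1 + G2)"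
    by (rule bij_betw_cong[THEN iffD1, rotated]) (auto simp: lincomb_append length_zvecs len)
  then have "bij_betw (lincomb (gs1 @ gs2)) (zvecs (ms1 @ ms2)) (G1 + G2)"
    using bij_betw_comp_iff[OF bij_betw_append_zvecs] by blast
  ultimately show ?thesis
    using len unfolding is_basis_def by simp
qed

lemma prod_iso_of_basis:
  assumes B: "is_basis gs ms P" and P: "is_subgroup P" and Q: "is_subgroup Q"
    and PQ: "P \<inter> Q = {0}" "P + Q = UNIV"
  shows "prod_iso ms Q (lincomb gs)"
proof -
  have "bij_betw (map_prod (lincomb gs) id) (zvecs ms \<times> Q) (P \<times> Q)"
    using B unfolding is_basis_def by (intro bij_betw_map_prod bij_betw_id) simp
  then have "bij_betw ((\<lambda>(a, b). a + b) \<circ> map_prod (lincomb gs) id) (zvecs ms \<times> Q) UNIV"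
    using bij_betw_set_plus[OF P Q PQ(1)] PQ(2) by (metis bij_betw_trans)
  moreover have "(\<lambda>(a, b). a + b) \<circ> map_prod (lincomb gs) id = (\<lambda>(xs, q). lincomb gs xs + q)"
    by auto
  moreover have "lincomb gs (zadd ms xs ys) = lincomb gs xs + lincomb gs ys" for xs ys
    using B unfolding is_basis_def by (intro lincomb_zadd) auto
  ultimately show ?thesis
    using Q unfolding prod_iso_def by simp
qed

lemma prod_iso_hom:
  "prod_iso ms Q \<phi> \<Longrightarrow> xs \<in> zvecs ms \<Longrightarrow> ys \<in> zvecs ms \<Longrightarrow> \<phi> (zadd ms xs ys) = \<phi> xs + \<phi> ys"
  unfolding prod_iso_def by blast

lemma prod_iso_surj:
  assumes "prod_iso ms Q \<phi>"
  obtains xs q where "xs \<in> zvecs ms" "q \<in> Q" "v = \<phi> xs + q"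
proof -
  have "v \<in> (\<lambda>(xs, q). \<phi> xs + q) ` (zvecs ms \<times> Q)"
    using assms unfolding prod_iso_def bij_betw_def by simp
  then show ?thesis using that by auto
qed

lemma prod_iso_inj:
  assumes "prod_iso ms Q \<phi>" "xs \<in> zvecs ms" "ys \<in> zvecs ms" "p \<in> Q" "q \<in> Q" "\<phi> xs + p = \<phi> ys + q"
  shows "xs = ys \<and> p = q"
proof -
  have "inj_on (\<lambda>(xs, q). \<phi> xs + q) (zvecs ms \<times> Q)"
    using assms(1) unfolding prod_iso_def bij_betw_def by blast
  then have "(xs, p) = (ys, q)"
    using assms(2-6) unfolding inj_on_def by auto
  then show ?thesis by simp
qed

lemma prod_iso_subgroup: "prod_iso ms Q \<phi> \<Longrightarrow> is_subgroup Q"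
  unfolding prod_iso_def by blast

lemma prod_iso_replicate_0:
  assumes p: "prod_iso ms Q \<phi>" and m: "\<forall>m\<in>set ms. 0 < m"
  shows "\<phi> (replicate (length ms) 0) = 0"
proof -
  let ?z = "replicate (length ms) 0"
  have "zadd ms ?z ?z = ?z"
    by (rule nth_equalityI) (simp_all add: zadd_nth)
  then have "\<phi> ?z = \<phi> ?z + \<phi> ?z"
    using prod_iso_hom[OF p replicate_0_in_zvecs[OF m] replicate_0_in_zvecs[OF m]] by simp
  then show ?thesis by simp
qed

section \<open>Finite abelian 2-groups\<close>

lemma exists_nsmul_two_power_boundary:
  assumes "b \<notin> M" "nsmul (2 ^ k) b \<in> M"
  shows "\<exists>j. nsmul (2 ^ j) b \<notin> M \<and> nsmul (2 ^ j) b + nsmul (2 ^ j) b \<in> M"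
  using assms(2)
proof (induction k)
  case 0
  then show ?case using assms(1) by simp
next
  case (Suc k)
  have "nsmul (2 ^ Suc k) b = nsmul (2 ^ k) b + nsmul (2 ^ k) b"
    by (simp only: power_Suc2 nsmul_mult nsmul_two)
  then show ?case
    using Suc by (cases "nsmul (2 ^ k) b \<in> M") auto
qed

lemma even_coefficient_of_double:
  fixes L :: "'a::ab_group_add set"
  assumes L: "is_subgroup L" "L \<inter> cyclic_subgroup g = {0}"
    and g: "nsmul (2 ^ k) g = 0" "nsmul (2 ^ (k - 1)) g \<noteq> 0"
    and b: "nsmul (2 ^ k) b = 0" "b + b = nsmul t g + l" "l \<in> L"
  shows "even t"
proof -
  have "k \<noteq> 0" using g by (metis diff_0_eq_0)
  then have two_k: "(2::nat) * 2 ^ (k - 1) = 2 ^ k" by (cases k) simp_all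
  have "nsmul (2 ^ (k - 1)) (b + b) = nsmul (2 * 2 ^ (k - 1)) b"
    by (simp only: nsmul_mult nsmul_two)
  also have "\<dots> = 0" using b(1) by (simp only: two_k)
  finally have "nsmul (2 ^ (k - 1)) (nsmul t g) = - nsmul (2 ^ (k - 1)) l"
    using b(2) by (simp add: nsmul_add_distrib eq_neg_iff_add_eq_0)
  moreover have "- nsmul (2 ^ (k - 1)) l \<in> L"
    using L(1) b(3) is_subgroup_nsmul unfolding is_subgroup_def by blast
  moreover have "nsmul (2 ^ (k - 1)) (nsmul t g) \<in> cyclic_subgroup g"
    unfolding cyclic_subgroup_def by (metis nsmul_mult rangeI)
  ultimately have "nsmul (2 ^ (k - 1)) (nsmul t g) \<in> L \<inter> cyclic_subgroup g"
    by simp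
  then have "nsmul (t * 2 ^ (k - 1)) g = 0"
    using L(2) by (simp add: nsmul_mult)
  then have "2 ^ k dvd t * 2 ^ (k - 1)"
    using prime_power_dvd_if_nsmul_eq_0[of 2 k g] g by simp
  then have "2 ^ (k - 1) * 2 dvd 2 ^ (k - 1) * t"
    by (metis two_k mult.commute)
  then show "even t" by simp
qed

text \<open>The maximality of the order of \<open>g\<close> makes the \<open>g\<close>-coefficient of \<open>b + b\<close> even, so \<open>b\<close>
  can be shifted by a multiple of \<open>g\<close> to an element \<open>c\<close> with \<open>c + c \<in> L\<close>.\<close>

lemma halving_outside_complement:
  fixes G L :: "'a::{finite,ab_group_add} set"
  assumes G: "is_subgroup G" and L: "is_subgroup L" "L \<inter> cyclic_subgroup g = {0}"
    and g: "g \<in> G" "nsmul (2 ^ (k - 1)) g \<noteq> 0" and k: "\<forall>x\<in>G. nsmul (2 ^ k) x = 0"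
    and b: "b \<in> G" "b \<notin> cyclic_subgroup g + L" "b + b \<in> cyclic_subgroup g + L"
  shows "\<exists>c\<in>G. c \<notin> cyclic_subgroup g + L \<and> c + c \<in> L"
proof -
  obtain a l where al: "b + b = a + l" "a \<in> cyclic_subgroup g" "l \<in> L"
    using b(3) by (rule set_plus_elim)
  obtain t where "a = nsmul t g" using al(2) unfolding cyclic_subgroup_def by blast
  with al have tl: "b + b = nsmul t g + l" "l \<in> L" by simp_all
  moreover have "nsmul (2 ^ k) g = 0" "nsmul (2 ^ k) b = 0" using k g(1) b(1) by simp_all
  ultimately have "even t"
    using even_coefficient_of_double[OF L _ g(2)] by blast
  then obtain s where s: "t = s + s" by (metis evenE mult_2)
  define c where "c = b - nsmul s g"
  have "c + c = (b + b) - nsmul t g"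
    unfolding c_def s by (simp add: nsmul_add algebra_simps)
  then have "c + c = l"
    using tl(1) by simp
  moreover have "c \<notin> cyclic_subgroup g + L"
  proof
    assume "c \<in> cyclic_subgroup g + L"
    then obtain a y where "c = a + y" "a \<in> cyclic_subgroup g" "y \<in> L" by (rule set_plus_elim)
    moreover have "a + nsmul s g \<in> cyclic_subgroup g"
      using \<open>a \<in> cyclic_subgroup g\<close> unfolding cyclic_subgroup_def by (auto simp flip: nsmul_add)
    moreover have "b = (a + nsmul s g) + y"
      using \<open>c = a + y\<close> unfolding c_def by (simp add: algebra_simps diff_eq_eq)
    ultimately have "b \<in> cyclic_subgroup g + L"
      by (simp add: set_plus_intro)
    then show False using b(2) by simp
  qed
  moreover have "c \<in> G" unfolding c_def using G b(1) g(1) by (simp add: is_subgroup_diff is_subgroup_nsmul)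
  ultimately show ?thesis using tl(2) by blast
qed

lemma complement_extend:
  fixes G L :: "'a::{finite,ab_group_add} set"
  assumes G: "is_subgroup G" and L: "is_subgroup L" "L \<subseteq> G" "L \<inter> cyclic_subgroup g = {0}"
    and g: "g \<in> G" "nsmul (2 ^ (k - 1)) g \<noteq> 0" and k: "\<forall>x\<in>G. nsmul (2 ^ k) x = 0"
    and ne: "cyclic_subgroup g + L \<noteq> G"
  shows "\<exists>L'. L \<subset> L' \<and> is_subgroup L' \<and> L' \<subseteq> G \<and> L' \<inter> cyclic_subgroup g = {0}"
proof -
  let ?C = "cyclic_subgroup g"
  have M: "is_subgroup (?C + L)"
    using is_subgroup_set_plus[OF is_subgroup_cyclic_subgroup L(1)] .
  have "?C \<subseteq> G" using G g(1) is_subgroup_nsmul unfolding cyclic_subgroup_def by blast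
  then have "x + y \<in> G" if "x \<in> ?C" "y \<in> L" for x y
    using G L(2) that unfolding is_subgroup_def by blast
  then have "?C + L \<subseteq> G" by (blast elim: set_plus_elim)
  then obtain b where b: "b \<in> G" "b \<notin> ?C + L" using ne by blast
  have "nsmul (2 ^ k) b \<in> ?C + L" using k b(1) M unfolding is_subgroup_def by simp
  then obtain j where "nsmul (2 ^ j) b \<notin> ?C + L" "nsmul (2 ^ j) b + nsmul (2 ^ j) b \<in> ?C + L"
    using exists_nsmul_two_power_boundary b(2) by blast
  moreover have "nsmul (2 ^ j) b \<in> G" using G b(1) by (rule is_subgroup_nsmul)
  ultimately obtain c where c: "c \<in> G" "c \<notin> ?C + L" "c + c \<in> L"
    using halving_outside_complement[OF G L(1,3) g k] by blast
  have "0 \<in> ?C" "0 \<in> L" using is_subgroup_cyclic_subgroup L(1) unfolding is_subgroup_def by auto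
  have "L \<subset> L \<union> c +o L"
  proof -
    have "c \<in> c +o L" using \<open>0 \<in> L\<close> by (metis add_0_right set_plus_intro2)
    moreover have "c \<notin> L" using c(2) \<open>0 \<in> ?C\<close> by (metis add_0 set_plus_intro)
    ultimately show ?thesis by blast
  qed
  moreover have "L \<union> c +o L \<subseteq> G"
  proof -
    have "c + y \<in> G" if "y \<in> L" for y using G c(1) L(2) that unfolding is_subgroup_def by blast
    then show ?thesis using L(2) unfolding elt_set_plus_def by blast
  qed
  moreover have "x = 0" if x: "x \<in> c +o L" "x \<in> ?C" for x
  proof -
    obtain y where "y \<in> L" "x = c + y" using x(1) unfolding elt_set_plus_def by blast
    then have "c = x + - y" by simp
    moreover have "- y \<in> L" using L(1) \<open>y \<in> L\<close> unfolding is_subgroup_def by blast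
    ultimately have "c \<in> ?C + L" using x(2) set_plus_intro by metis
    then show ?thesis using c(2) by simp
  qed
  then have "(L \<union> c +o L) \<inter> ?C = {0}" using L(3) \<open>0 \<in> L\<close> \<open>0 \<in> ?C\<close> by blast
  ultimately show ?thesis
    using is_subgroup_Un_coset[OF L(1) c(3)] by blast
qed

lemma exists_complement_cyclic_subgroup:
  fixes G :: "'a::{finite,ab_group_add} set"
  assumes G: "is_subgroup G" and g: "g \<in> G" "nsmul (2 ^ (k - 1)) g \<noteq> 0"
    and k: "\<forall>x\<in>G. nsmul (2 ^ k) x = 0"
  shows "\<exists>L. is_subgroup L \<and> L \<subseteq> G \<and> L \<inter> cyclic_subgroup g = {0} \<and> cyclic_subgroup g + L = G"
proof -
  define S where "S = {L. is_subgroup L \<and> L \<subseteq> G \<and> L \<inter> cyclic_subgroup g = {0}}"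
  have "{0} \<in> S"
    using is_subgroup_zero G is_subgroup_cyclic_subgroup unfolding S_def is_subgroup_def by auto
  moreover have "finite S" by simp
  ultimately obtain L where L: "L \<in> S" and max: "\<forall>L'\<in>S. L \<subseteq> L' \<longrightarrow> L = L'"
    using finite_has_maximal[of S] by blast
  have L': "is_subgroup L" "L \<subseteq> G" "L \<inter> cyclic_subgroup g = {0}"
    using L unfolding S_def by auto
  have "cyclic_subgroup g + L = G"
  proof (rule ccontr)
    assume "cyclic_subgroup g + L \<noteq> G"
    then obtain L' where "L \<subset> L'" "L' \<in> S"
      using complement_extend[OF G L' g k] unfolding S_def by blast
    then show False using max by blast
  qed
  with L' show ?thesis by blast
qed

lemma exists_element_of_maximal_order:
  fixes G :: "'a::{finite,ab_group_add} set"
  assumes G: "is_subgroup G" "G \<noteq> {0}" and two: "\<forall>x\<in>G. \<exists>e. nsmul (2 ^ e) x = 0"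
  obtains g k where "g \<in> G" "0 < k" "nsmul (2 ^ (k - 1)) g \<noteq> 0" "\<forall>x\<in>G. nsmul (2 ^ k) x = 0"
proof -
  define e where "e x = (LEAST e. nsmul (2 ^ e) x = 0)" for x :: 'a
  have e: "nsmul (2 ^ e x) x = 0" if "x \<in> G" for x
    unfolding e_def using two that by (metis (mono_tags, lifting) LeastI)
  have e_le: "e x \<le> j" if "nsmul (2 ^ j) x = 0" for x j
    unfolding e_def using that by (rule Least_le)
  have "finite (e ` G)" "e ` G \<noteq> {}" using G(1) unfolding is_subgroup_def by auto
  from Max_in[OF this] obtain g where g: "g \<in> G" "e g = Max (e ` G)" by auto
  have max: "e x \<le> e g" if "x \<in> G" for x
    using g(2) that by simp
  have all: "\<forall>x\<in>G. nsmul (2 ^ e g) x = 0"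
    using e max nsmul_eq_0_dvd le_imp_power_dvd by blast
  obtain x0 where x0: "x0 \<in> G" "x0 \<noteq> 0" using G unfolding is_subgroup_def by blast
  have "e x0 \<noteq> 0" using e[OF x0(1)] x0(2) by (metis add_0_right nsmul.simps power_0 One_nat_def)
  then have pos: "0 < e g" using max[OF x0(1)] by simp
  have "nsmul (2 ^ (e g - 1)) g \<noteq> 0"
    using e_le[of "e g - 1" g] pos by linarith
  then show ?thesis using that g(1) pos all by blast
qed

lemma basis_cyclic_two_power:
  assumes "nsmul (2 ^ k) g = 0" "nsmul (2 ^ (k - 1)) g \<noteq> (0::'a::ab_group_add)"
  shows "is_basis [g] [2 ^ k] (cyclic_subgroup g)"
proof -
  have "nsmul j g \<noteq> 0" if "0 < j" "j < 2 ^ k" for j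
    using that prime_power_dvd_if_nsmul_eq_0[of 2 k g j] assms by (auto dest: nat_dvd_not_less)
  then show ?thesis using assms(1) by (intro basis_single) auto
qed

lemma two_group_basis:
  fixes G :: "'a::{finite,ab_group_add} set"
  assumes "is_subgroup G" "\<forall>x\<in>G. \<exists>e. nsmul (2 ^ e) x = 0"
  shows "\<exists>gs ks. is_basis gs (map (\<lambda>k. 2 ^ k) ks) G \<and> sorted ks
           \<and> (\<forall>k\<in>set ks. 1 \<le> k \<and> (\<exists>x\<in>G. nsmul (2 ^ (k - 1)) x \<noteq> 0))"
  using assms
proof (induction "card G" arbitrary: G rule: less_induct)
  case less
  note G = less.prems(1)
  show ?case
  proof (cases "G = {0}")
    case True
    then show ?thesis using basis_Nil by (intro exI[of _ "[]"]) auto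
  next
    case False
    obtain g k where g: "g \<in> G" "0 < k" "nsmul (2 ^ (k - 1)) g \<noteq> 0"
      and k: "\<forall>x\<in>G. nsmul (2 ^ k) x = 0"
      using exists_element_of_maximal_order[OF G False less.prems(2)] by blast
    obtain L where L: "is_subgroup L" "L \<subseteq> G" "L \<inter> cyclic_subgroup g = {0}"
      and GL: "cyclic_subgroup g + L = G"
      using exists_complement_cyclic_subgroup[OF G g(1,3) k] by blast
    have "g \<noteq> 0" using g(3) by auto
    then have "g \<notin> L" using L(3) generator_in_cyclic_subgroup by blast
    then have "card L < card G" using L(2) g(1) by (metis psubsetI psubset_card_mono finite)
    moreover have "\<forall>x\<in>L. \<exists>e. nsmul (2 ^ e) x = 0" using L(2) less.prems(2) by blast
    ultimately obtain gs ks where B: "is_basis gs (map (\<lambda>k. 2 ^ k) ks) L" and "sorted ks"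
      and ks: "\<forall>k\<in>set ks. 1 \<le> k \<and> (\<exists>x\<in>L. nsmul (2 ^ (k - 1)) x \<noteq> 0)"
      using less.hyps L(1) by blast
    have "is_basis [g] [2 ^ k] (cyclic_subgroup g)"
      using basis_cyclic_two_power g(1,3) k by blast
    then have "is_basis (gs @ [g]) (map (\<lambda>k. 2 ^ k) ks @ [2 ^ k]) (L + cyclic_subgroup g)"
      by (rule basis_append[OF B _ L(1) is_subgroup_cyclic_subgroup L(3)])
    then have "is_basis (gs @ [g]) (map (\<lambda>k. 2 ^ k) (ks @ [k])) G"
      using GL by (simp add: add.commute)
    moreover have "k' \<le> k" if "k' \<in> set ks" for k'
    proof (rule ccontr)
      assume "\<not> k' \<le> k"
      then have "2 ^ k dvd (2::nat) ^ (k' - 1)" by (simp add: le_imp_power_dvd)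
      then show False using ks that k L(2) nsmul_eq_0_dvd by blast
    qed
    then have "sorted (ks @ [k])" using \<open>sorted ks\<close> by (simp add: sorted_append)
    moreover have "\<forall>k'\<in>set (ks @ [k]). 1 \<le> k' \<and> (\<exists>x\<in>G. nsmul (2 ^ (k' - 1)) x \<noteq> 0)"
      using ks L(2) g by auto
    ultimately show ?thesis by blast
  qed
qed

section \<open>Primary decomposition at the prime 2\<close>

definition two_part :: "'a::ab_group_add set" where
  "two_part = {x. \<exists>e. nsmul (2 ^ e) x = 0}"

definition odd_part :: "'a::ab_group_add set" where
  "odd_part = {x. \<exists>m. odd m \<and> nsmul m x = 0}"

lemma is_subgroup_two_part: "is_subgroup two_part"
  unfolding is_subgroup_def two_part_def
proof (intro conjI ballI)
  fix x y :: 'a assume "x \<in> {x. \<exists>e. nsmul (2 ^ e) x = 0}" "y \<in> {x. \<exists>e. nsmul (2 ^ e) x = 0}"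
  then obtain d e where "nsmul (2 ^ d) x = 0" "nsmul (2 ^ e) y = 0" by blast
  then have "nsmul (2 ^ (d + e)) x = 0" "nsmul (2 ^ (d + e)) y = 0"
    by (simp_all add: power_add nsmul_mult) (metis mult.commute nsmul_mult nsmul_zero)
  then have "nsmul (2 ^ (d + e)) (x + y) = 0" by (simp add: nsmul_add_distrib)
  then show "x + y \<in> {x. \<exists>e. nsmul (2 ^ e) x = 0}" by blast
qed (auto simp: nsmul_minus)

lemma is_subgroup_odd_part: "is_subgroup odd_part"
  unfolding is_subgroup_def odd_part_def
proof (intro conjI ballI)
  show "0 \<in> {x::'a. \<exists>m. odd m \<and> nsmul m x = 0}" by (auto intro: exI[of _ 1])
next
  fix x y :: 'a assume "x \<in> {x. \<exists>m. odd m \<and> nsmul m x = 0}" "y \<in> {x. \<exists>m. odd m \<and> nsmul m x = 0}"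
  then obtain m n where "odd m" "nsmul m x = 0" "odd n" "nsmul n y = 0" by blast
  then have "odd (m * n)" "nsmul (m * n) x = 0" "nsmul (m * n) y = 0"
    by (simp_all add: nsmul_mult) (metis mult.commute nsmul_mult nsmul_zero)
  then have "odd (m * n) \<and> nsmul (m * n) (x + y) = 0" by (simp add: nsmul_add_distrib)
  then show "x + y \<in> {x. \<exists>m. odd m \<and> nsmul m x = 0}" by blast
qed (auto simp: nsmul_minus)

lemma gcd_two_power_odd: "odd m \<Longrightarrow> gcd (2 ^ e) m = (1::nat)"
  by (simp add: coprime_iff_gcd_eq_1[symmetric])

lemma two_part_inter_odd_part: "two_part \<inter> odd_part = {0::'a::ab_group_add}"
proof -
  have "x = 0" if "nsmul (2 ^ e) x = 0" "odd m" "nsmul m x = 0" for x :: 'a and e m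
    using nsmul_gcd_eq_0[OF that(1,3)] gcd_two_power_odd[OF that(2)] by simp
  then show ?thesis
    using is_subgroup_two_part is_subgroup_odd_part
    unfolding two_part_def odd_part_def is_subgroup_def by blast
qed

lemma two_part_plus_odd_part: "two_part + odd_part = (UNIV :: 'a::{finite,ab_group_add} set)"
proof -
  have "x \<in> two_part + odd_part" for x :: 'a
  proof -
    obtain n where n: "0 < n" "nsmul n x = 0" using exists_nsmul_eq_0 by blast
    obtain m where m: "n = 2 ^ multiplicity 2 n * m" "\<not> 2 dvd m"
      using n(1) multiplicity_decompose'[of n 2] by auto
    define e where "e = multiplicity 2 n"
    have y: "nsmul (2 ^ e) x \<in> odd_part" and z: "nsmul m x \<in> two_part"
      unfolding odd_part_def two_part_def using n(2) m
      by (auto simp flip: nsmul_mult e_def simp: mult.commute)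
    obtain a b where "2 ^ e * a = m * b + gcd (2 ^ e) m" using bezout_nat[of "2 ^ e" m] by auto
    then have ab: "2 ^ e * a = m * b + 1" using gcd_two_power_odd m(2) by simp
    have "nsmul a (nsmul (2 ^ e) x) = nsmul (m * b + 1) x"
      by (simp only: nsmul_mult[symmetric] ab)
    also have "\<dots> = nsmul b (nsmul m x) + x"
      by (simp add: nsmul_add nsmul_mult)
    finally have "nsmul a (nsmul (2 ^ e) x) = nsmul b (nsmul m x) + x" .
    then have "x = - nsmul b (nsmul m x) + nsmul a (nsmul (2 ^ e) x)"
      by (simp add: algebra_simps)
    moreover have "- nsmul b (nsmul m x) \<in> two_part" "nsmul a (nsmul (2 ^ e) x) \<in> odd_part"
      using y z is_subgroup_two_part is_subgroup_odd_part is_subgroup_nsmul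
      unfolding is_subgroup_def by blast+
    ultimately show ?thesis by (metis set_plus_intro)
  qed
  then show ?thesis by blast
qed

lemma odd_card_odd_part: "odd (card (odd_part :: 'a::{finite,ab_group_add} set))"
proof -
  have "- x \<noteq> x" if x: "x \<in> odd_part - {0}" for x :: 'a
  proof
    assume "- x = x"
    then have "nsmul (2 ^ 1) x = 0" by (simp add: nsmul_two eq_neg_iff_add_eq_0[symmetric])
    moreover obtain m where "odd m" "nsmul m x = 0" using x unfolding odd_part_def by blast
    ultimately have "nsmul (gcd (2 ^ 1) m) x = 0" using nsmul_gcd_eq_0 by blast
    then show False using x gcd_two_power_odd[OF \<open>odd m\<close>, of 1] by simp
  qed
  then have "even (card (odd_part - {0::'a}))"
    using is_subgroup_odd_part unfolding is_subgroup_def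
    by (intro even_card_fixpoint_free_involution[where f = uminus]) auto
  moreover have "(0::'a) \<in> odd_part"
    using is_subgroup_odd_part unfolding is_subgroup_def by blast
  then have "card (odd_part :: 'a set) = Suc (card (odd_part - {0::'a}))"
    by (rule card.remove[OF finite])
  ultimately show ?thesis by simp
qed

section \<open>Total perfect codes\<close>

definition is_nondouble_pair :: "'a::ab_group_add set \<Rightarrow> bool" where
  "is_nondouble_pair H \<longleftrightarrow> (\<exists>h. h \<noteq> 0 \<and> H = {0, h} \<and> (\<forall>v. v + v \<noteq> h))"

definition is_doubles_triple :: "'a::ab_group_add set \<Rightarrow> bool" where
  "is_doubles_triple H \<longleftrightarrow> (\<exists>h. h \<noteq> 0 \<and> h + h + h = 0 \<and> H = {0, h, h + h} \<and> (\<forall>u. u + u \<in> H))"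

lemma total_perfect_code_subgroup_shape:
  assumes H: "is_subgroup H" and C: "total_perfect_code H C"
  shows "\<exists>c. c \<noteq> 0 \<and> H = {0, c, - c}"
proof -
  have U: "\<exists>!c. c \<in> C \<and> ssg_adj H v c" for v using C unfolding total_perfect_code_def by blast
  obtain c where c: "c \<in> C" "ssg_adj H 0 c" using U[of 0] by blast
  then have cH: "c \<in> H" "c \<noteq> 0" unfolding ssg_adj_def by auto
  obtain c' where c': "c' \<in> C" "ssg_adj H c c'" using U[of c] by blast
  then have "c' \<in> H" using H cH is_subgroup_diff[of H "c + c'" c] unfolding ssg_adj_def by simp
  then have "c' = 0"
    using U[of 0] c c' cH unfolding ssg_adj_def by (metis add_0 insert_Diff_single insert_iff)
  then have "0 \<in> C" using c' by simp
  have "v \<in> {0, c, - c}" if v: "v \<in> H" for v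
  proof (rule ccontr)
    assume nv: "v \<notin> {0, c, - c}"
    then have "ssg_adj H v 0" "ssg_adj H v c"
      using v cH H nv unfolding ssg_adj_def is_subgroup_def by (auto simp: add_eq_0_iff2)
    then show False using U[of v] \<open>0 \<in> C\<close> c(1) cH(2) by blast
  qed
  moreover have "{0, c, - c} \<subseteq> H" using H cH unfolding is_subgroup_def by auto
  ultimately show ?thesis using cH by blast
qed

lemma nondouble_if_every_vertex_has_neighbour:
  assumes "\<forall>v. \<exists>c. ssg_adj H v c" and "H = {0, h}"
  shows "v + v \<noteq> h"
proof
  assume vv: "v + v = h"
  obtain c where c: "ssg_adj H v c" using assms(1) by blast
  then have "v + c = v + v" using assms(2) vv unfolding ssg_adj_def by auto
  then show False using c unfolding ssg_adj_def by simp
qed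

lemma total_perfect_code_neighbours_of_neg:
  fixes H :: "'a::ab_group_add set"
  assumes H: "H = {0, h, - h}" "h \<noteq> 0" "h \<noteq> - h" and w: "w + w \<notin> H"
    and C: "total_perfect_code H C"
  shows "(w + h \<in> C) \<noteq> (w - h \<in> C)"
proof -
  have adj: "ssg_adj H (- w) c \<longleftrightarrow> c = w + h \<or> c = w - h" for c
  proof -
    have "w + h \<noteq> - w"
    proof
      assume "w + h = - w"
      then have "w + w = - h" by (auto simp: algebra_simps eq_neg_iff_add_eq_0)
      then show False using w H(1) by simp
    qed
    moreover have "w - h \<noteq> - w"
    proof
      assume "w - h = - w"
      then have "w + w = h" by (metis add_diff_cancel_left' diff_add_cancel minus_diff_eq add_uminus_conv_diff)
      then show False using w H(1) by simp
    qed
    moreover have "(- w + c = h) \<longleftrightarrow> c = w + h" "(- w + c = - h) \<longleftrightarrow> c = w - h"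
      by (auto simp: algebra_simps)
    moreover have H0: "H - {0} = {h, - h}" using H by auto
    ultimately show ?thesis unfolding ssg_adj_def H0 by auto
  qed
  have "\<exists>!c. c \<in> C \<and> ssg_adj H (- w) c"
    using C unfolding total_perfect_code_def by blast
  then have "\<exists>!c. c \<in> C \<and> (c = w + h \<or> c = w - h)"
    by (simp only: adj)
  moreover have "w + h \<noteq> w - h" using H(3) by (metis add_left_cancel diff_conv_add_uminus)
  ultimately show ?thesis by blast
qed

text \<open>If \<open>u + u \<notin> H\<close>, each of the pairs \<open>{u + h, u - h}\<close>, \<open>{u - h, u}\<close>, \<open>{u, u + h}\<close> contains
  exactly one code element, which is impossible.\<close>

lemma total_perfect_code_doubles_in_triple:
  fixes H :: "'a::ab_group_add set"
  assumes H: "is_subgroup H" "H = {0, h, - h}" and h: "h \<noteq> 0" "h + h = - h"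
    and C: "total_perfect_code H C"
  shows "u + u \<in> H"
proof (rule ccontr)
  assume u: "u + u \<notin> H"
  have hh: "h \<noteq> - h" using h by auto
  have "h \<in> H" using H(2) by simp
  then have add: "x + h \<in> H" if "x \<in> H" for x
    using H(1) that unfolding is_subgroup_def by blast
  have "(u + h) + (u + h) + h = u + u + (h + h + h)" "(u - h) + (u - h) + h + h = u + u"
    by (simp_all add: algebra_simps)
  then have "(u + h) + (u + h) + h = u + u" "(u - h) + (u - h) + h + h = u + u"
    using h(2) by simp_all
  then have n1: "(u + h) + (u + h) \<notin> H" and n2: "(u - h) + (u - h) \<notin> H"
    using u add by (metis, metis)
  have r: "u + h + h = u - h" "u - h - h = u + h"
    using h(2) by (simp_all add: algebra_simps)
  have "(u + h \<in> C) \<noteq> (u - h \<in> C)"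
    by (rule total_perfect_code_neighbours_of_neg[OF H(2) h(1) hh u C])
  moreover have "(u + h + h \<in> C) \<noteq> (u + h - h \<in> C)"
    by (rule total_perfect_code_neighbours_of_neg[OF H(2) h(1) hh n1 C])
  then have "(u - h \<in> C) \<noteq> (u \<in> C)" by (simp only: r add_diff_cancel) simp
  moreover have "(u - h + h \<in> C) \<noteq> (u - h - h \<in> C)"
    by (rule total_perfect_code_neighbours_of_neg[OF H(2) h(1) hh n2 C])
  then have "(u \<in> C) \<noteq> (u + h \<in> C)" by (simp only: r diff_add_cancel) simp
  ultimately show False by blast
qed

lemma total_perfect_code_imp_pair_or_triple:
  assumes H: "is_subgroup H" and C: "total_perfect_code H C"
  shows "is_nondouble_pair H \<or> is_doubles_triple H"
proof -
  obtain c where c: "c \<noteq> 0" "H = {0, c, - c}"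
    using total_perfect_code_subgroup_shape[OF H C] by blast
  have nb: "\<forall>v. \<exists>c. ssg_adj H v c" using C unfolding total_perfect_code_def by blast
  show ?thesis
  proof (cases "c = - c")
    case True
    then have "H = {0, c}" using c(2) by auto
    then show ?thesis
      using nondouble_if_every_vertex_has_neighbour[OF nb] c(1) unfolding is_nondouble_pair_def by blast
  next
    case False
    have "c + c \<in> H" using H c(2) unfolding is_subgroup_def by auto
    moreover have "c + c \<noteq> 0" using False by (simp add: add_eq_0_iff2)
    moreover have "c + c \<noteq> c" using c(1) by simp
    ultimately have cc: "c + c = - c" using c(2) by auto
    then have "\<forall>u. u + u \<in> H" using total_perfect_code_doubles_in_triple[OF H c(2) c(1) cc C] by blast
    moreover have "c + c + c = 0" "H = {0, c, c + c}" using cc c(2) by simp_all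
    ultimately show ?thesis using c(1) unfolding is_doubles_triple_def by blast
  qed
qed

lemma total_perfect_code_UNIV:
  assumes "is_nondouble_pair H"
  shows "total_perfect_code H UNIV"
proof -
  obtain h where h: "h \<noteq> 0" "H = {0, h}" "\<forall>v. v + v \<noteq> h"
    using assms unfolding is_nondouble_pair_def by blast
  have "ssg_adj H v c \<longleftrightarrow> c = h - v" for v c
  proof
    assume "ssg_adj H v c"
    then show "c = h - v" using h(2) unfolding ssg_adj_def by (auto simp: algebra_simps)
  next
    assume c: "c = h - v"
    then have "v \<noteq> c" using h(3) by (metis add_diff_cancel_left' diff_add_cancel add.commute)
    then show "ssg_adj H v c" using c h(1,2) unfolding ssg_adj_def by simp
  qed
  then show ?thesis unfolding total_perfect_code_def by simp
qed

lemma ex1_translate: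
  assumes "\<exists>!s. P (s::'a::ab_group_add)"
  shows "\<exists>!c. P (v + c)"
proof -
  obtain s where s: "P s" "\<And>t. P t \<Longrightarrow> t = s" using assms by blast
  show ?thesis
  proof (rule ex1I[of _ "s - v"])
    show "P (v + (s - v))" using s(1) by simp
    fix c assume "P (v + c)"
    then have "v + c = s" by (rule s(2))
    then show "c = s - v" by (metis add_diff_cancel_left')
  qed
qed

lemma total_perfect_code_halves:
  assumes h: "h \<noteq> 0" "h + h + h = 0" "H = {0, h, h + h}" and all: "\<forall>u. u + u \<in> H"
  shows "total_perfect_code H {u. u + u = 0 \<or> u + u = h + h}"
proof -
  have hh0: "h + h \<noteq> 0"
  proof
    assume "h + h = 0"
    then have "h + h + h = h" by simp
    then show False using h(1,2) by simp
  qed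
  have hhh: "h + h \<noteq> h" using h(1) by simp
  have "(h + h) + (h + h) = (h + h + h) + h" by (simp add: add.assoc)
  then have X: "(h + h) + (h + h) = h" using h(2) by simp
  define C where "C = {u. u + u = 0 \<or> u + u = h + h}"
  have "\<exists>!c. c \<in> C \<and> ssg_adj H v c" for v
  proof -
    define P where "P s \<longleftrightarrow> s \<in> {h, h + h} \<and> s \<noteq> v + v \<and> s + s - (v + v) \<in> {0, h + h}" for s
    have "c \<in> C \<and> ssg_adj H v c \<longleftrightarrow> P (v + c)" for c
    proof -
      have "c + c = (v + c) + (v + c) - (v + v)" by (simp add: algebra_simps)
      moreover have "H - {0} = {h, h + h}" using h(3) h(1) hh0 by auto
      ultimately show ?thesis unfolding C_def P_def ssg_adj_def by auto
    qed
    moreover have "\<exists>!s. P s"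
    proof -
      have X2: "(h + h) + (h + h) - h = 0" using X by simp
      have "v + v = 0 \<or> v + v = h \<or> v + v = h + h" using all h(3) by auto
      then show ?thesis
      proof (elim disjE)
        assume r: "v + v = 0"
        show ?thesis unfolding P_def r using h(1) hh0 hhh by (intro ex1I[of _ h]) (auto simp: X)
      next
        assume r: "v + v = h"
        show ?thesis unfolding P_def r using h(1) hh0 hhh by (intro ex1I[of _ "h + h"]) (auto simp: X X2)
      next
        assume r: "v + v = h + h"
        show ?thesis unfolding P_def r using h(1) hh0 hhh by (intro ex1I[of _ h]) (auto simp: X)
      qed
    qed
    ultimately show ?thesis using ex1_translate[of P v] by simp
  qed
  then show ?thesis unfolding C_def total_perfect_code_def by blast
qed

lemma ex_total_perfect_code_iff:
  assumes "is_subgroup H"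
  shows "(\<exists>C. total_perfect_code H C) \<longleftrightarrow> is_nondouble_pair H \<or> is_doubles_triple H"
proof
  assume "\<exists>C. total_perfect_code H C"
  then show "is_nondouble_pair H \<or> is_doubles_triple H"
    using total_perfect_code_imp_pair_or_triple[OF assms] by blast
next
  assume "is_nondouble_pair H \<or> is_doubles_triple H"
  then show "\<exists>C. total_perfect_code H C"
  proof
    assume "is_nondouble_pair H"
    then show ?thesis using total_perfect_code_UNIV by blast
  next
    assume "is_doubles_triple H"
    then obtain h where "h \<noteq> 0" "h + h + h = 0" "H = {0, h, h + h}" "\<forall>u. u + u \<in> H"
      unfolding is_doubles_triple_def by blast
    then show ?thesis by (intro exI) (rule total_perfect_code_halves)
  qed
qed

section \<open>The concrete decompositions\<close>

text \<open>Cases (1), (2) and (3) of the theorem.\<close>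

definition elementary_odd_form :: "'a::ab_group_add set \<Rightarrow> bool" where
  "elementary_odd_form H \<longleftrightarrow>
     (\<exists>n\<ge>1. \<exists>(Q::'a set) \<phi>. prod_iso (replicate n 2) Q \<phi> \<and> odd (card Q) \<and> card H = 2)"

definition elementary_cyclic_odd_form :: "'a::ab_group_add set \<Rightarrow> bool" where
  "elementary_cyclic_odd_form H \<longleftrightarrow>
     (\<exists>n ks Q \<phi>. n \<ge> 1 \<and> ks \<noteq> [] \<and> (\<forall>k\<in>set ks. k \<ge> 2)
        \<and> prod_iso (replicate n 2 @ map (\<lambda>k. 2 ^ k) ks) Q \<phi> \<and> odd (card Q)
        \<and> (\<exists>x z. length x = n \<and> set x \<subseteq> {0, 1} \<and> 1 \<in> set x
              \<and> length z = length ks \<and> (\<forall>j<length ks. z ! j \<in> {0, 2 ^ (ks ! j - 1)})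
              \<and> H = {0, \<phi> (x @ z)}))"

definition elementary_three_form :: "'a::ab_group_add set \<Rightarrow> bool" where
  "elementary_three_form H \<longleftrightarrow>
     (\<exists>n \<phi>. prod_iso (replicate n 2 @ [3]) {0} \<phi> \<and> H = \<phi> ` {replicate n 0 @ [c] | c. c < 3})"

lemma double_in_odd_factor:
  assumes p: "prod_iso (replicate n 2) Q \<phi>"
  shows "v + v \<in> Q"
proof -
  obtain xs q where xs: "xs \<in> zvecs (replicate n 2)" "q \<in> Q" "v = \<phi> xs + q"
    using prod_iso_surj[OF p] .
  have "zadd (replicate n 2) xs xs = replicate n 0"
    by (rule nth_equalityI) (simp_all add: zadd_nth)
  then have "v + v = q + q"
    using prod_iso_hom[OF p xs(1) xs(1)] prod_iso_replicate_0[OF p] xs(3)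
    by (simp add: algebra_simps)
  then show ?thesis using prod_iso_subgroup[OF p] xs(2) unfolding is_subgroup_def by simp
qed

lemma nondouble_pair_if_elementary_times_odd:
  fixes H Q :: "'a::{finite,ab_group_add} set"
  assumes H: "is_subgroup H" and p: "prod_iso (replicate n 2) Q \<phi>"
    and Q: "odd (card Q)" and "card H = 2"
  shows "is_nondouble_pair H"
proof -
  obtain x y where "H = {x, y}" "x \<noteq> y" using \<open>card H = 2\<close> by (metis card_2_iff)
  moreover have "0 \<in> H" using H unfolding is_subgroup_def by blast
  ultimately obtain h where h: "H = {0, h}" "h \<noteq> 0" by auto
  then have "h + h = 0" using H unfolding is_subgroup_def by auto
  have "v + v \<noteq> h" for v
    using double_in_odd_factor[OF p, of v] even_card_subgroup_if_order_two[OF prod_iso_subgroup[OF p]]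
      h(2) \<open>h + h = 0\<close> Q by auto
  then show ?thesis using h unfolding is_nondouble_pair_def by blast
qed

lemma nondouble_pair_if_unit_coordinate:
  assumes p: "prod_iso ms Q \<phi>" and ms: "\<forall>m\<in>set ms. 0 < m"
    and a: "a \<in> zvecs ms" "l < length ms" "ms ! l = 2" "a ! l = 1"
  shows "is_nondouble_pair {0, \<phi> a}"
proof -
  have Q0: "0 \<in> Q" using prod_iso_subgroup[OF p] unfolding is_subgroup_def by blast
  have "\<phi> a \<noteq> 0"
  proof
    assume "\<phi> a = 0"
    then have "\<phi> a + 0 = \<phi> (replicate (length ms) 0) + 0"
      using prod_iso_replicate_0[OF p ms] by simp
    then have "a = replicate (length ms) 0"
      using prod_iso_inj[OF p a(1) replicate_0_in_zvecs[OF ms] Q0 Q0] by blast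
    then show False using a(2,4) by simp
  qed
  moreover have "v + v \<noteq> \<phi> a" for v
  proof
    assume vv: "v + v = \<phi> a"
    obtain xs q where xs: "xs \<in> zvecs ms" "q \<in> Q" "v = \<phi> xs + q"
      using prod_iso_surj[OF p] .
    have qq: "q + q \<in> Q" using prod_iso_subgroup[OF p] xs(2) unfolding is_subgroup_def by blast
    have "\<phi> (zadd ms xs xs) + (q + q) = \<phi> a + 0"
      using prod_iso_hom[OF p xs(1) xs(1)] xs(3) vv by (simp add: algebra_simps)
    then have "zadd ms xs xs = a"
      using prod_iso_inj[OF p zadd_in_zvecs[OF ms] a(1) qq Q0] by blast
    then show False using a(2-4) zadd_nth[OF a(2), of xs xs] by simp
  qed
  ultimately show ?thesis unfolding is_nondouble_pair_def by blast
qed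

lemma doubles_triple_if_elementary_times_three:
  fixes H :: "'a::ab_group_add set"
  assumes p: "prod_iso (replicate n 2 @ [3]) {0} \<phi>"
    and H: "H = \<phi> ` {replicate n 0 @ [c] | c. c < 3}"
  shows "is_doubles_triple H"
proof -
  let ?ms = "replicate n 2 @ [3::nat]"
  define e where "e c = replicate n 0 @ [c]" for c :: nat
  have ms: "\<forall>m\<in>set ?ms. 0 < m" by auto
  have e_in: "e c \<in> zvecs ?ms" if "c < 3" for c
    unfolding e_def zvecs_def using that by (auto simp: nth_append)
  have e_add: "zadd ?ms (e c) (e d) = e ((c + d) mod 3)" for c d
    by (rule nth_equalityI) (auto simp: zadd_nth e_def nth_append)
  have zadd_self: "zadd ?ms xs xs = e ((xs ! n + xs ! n) mod 3)" for xs
    by (rule nth_equalityI) (auto simp: zadd_nth e_def nth_append less_Suc_eq)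
  have "\<phi> (e 0) = 0"
    using prod_iso_replicate_0[OF p ms] unfolding e_def by (simp add: replicate_append_same)
  define h where "h = \<phi> (e 1)"
  have mod3: "(1 + 1) mod 3 = (2::nat)" "(2 + 1) mod 3 = (0::nat)" by simp_all
  have phi2: "\<phi> (e 2) = h + h"
    unfolding h_def using prod_iso_hom[OF p e_in e_in, of 1 1] e_add[of 1 1, unfolded mod3] by simp
  have h3: "h + h + h = 0"
    using prod_iso_hom[OF p e_in e_in, of 2 1] e_add[of 2 1, unfolded mod3] \<open>\<phi> (e 0) = 0\<close> phi2
    unfolding h_def by simp
  have "h \<noteq> 0"
  proof
    assume "h = 0"
    then have "\<phi> (e 1) + 0 = \<phi> (e 0) + 0" using \<open>\<phi> (e 0) = 0\<close> unfolding h_def by simp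
    then have "e 1 = e 0" using prod_iso_inj[OF p e_in e_in] by simp
    then show False unfolding e_def by simp
  qed
  have cs: "{replicate n 0 @ [c] | c. c < 3} = {e 0, e 1, e 2}"
    unfolding e_def by (auto simp: less_Suc_eq numeral_3_eq_3)
  have HH: "H = {0, h, h + h}"
    unfolding H cs using \<open>\<phi> (e 0) = 0\<close> phi2 h_def by simp
  have "u + u \<in> H" for u
  proof -
    obtain xs q where xs: "xs \<in> zvecs ?ms" "q \<in> {0}" "u = \<phi> xs + q"
      using prod_iso_surj[OF p] .
    then have "u + u = \<phi> (e ((xs ! n + xs ! n) mod 3))"
      using prod_iso_hom[OF p xs(1) xs(1)] zadd_self by simp
    moreover have "(xs ! n + xs ! n) mod 3 < 3" by simp
    ultimately show ?thesis unfolding H e_def by blast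
  qed
  then show ?thesis using \<open>h \<noteq> 0\<close> h3 HH unfolding is_doubles_triple_def by blast
qed

lemma is_subgroup_elementary: "is_subgroup {w::'a::ab_group_add. w + w = 0}"
  unfolding is_subgroup_def
proof (intro conjI ballI)
  fix x y :: 'a assume "x \<in> {w. w + w = 0}" "y \<in> {w. w + w = 0}"
  moreover have "(x + y) + (x + y) = (x + x) + (y + y)" by (simp add: algebra_simps)
  ultimately show "x + y \<in> {w. w + w = 0}" by simp
next
  fix x :: 'a assume "x \<in> {w. w + w = 0}"
  moreover have "(- x) + (- x) = - (x + x)" by (simp add: algebra_simps)
  ultimately show "- x \<in> {w. w + w = 0}" by simp
qed simp

lemma elementary_subgroup_basis:
  "\<exists>gs n. is_basis gs (replicate n 2) {w::'a::{finite,ab_group_add}. w + w = 0}"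
proof -
  let ?T = "{w::'a. w + w = 0}"
  have "\<exists>e. nsmul (2 ^ e) x = 0" if "x \<in> ?T" for x
    using that by (intro exI[of _ 1]) (simp add: nsmul_two)
  then obtain gs ks where B: "is_basis gs (map (\<lambda>k. 2 ^ k) ks) ?T"
    and ks: "\<forall>k\<in>set ks. 1 \<le> k \<and> (\<exists>x\<in>?T. nsmul (2 ^ (k - 1)) x \<noteq> 0)"
    using two_group_basis[OF is_subgroup_elementary] by blast
  have "k = 1" if k: "k \<in> set ks" for k
  proof (rule ccontr)
    obtain x where x: "x \<in> ?T" "nsmul (2 ^ (k - 1)) x \<noteq> 0" using ks k by blast
    assume "k \<noteq> 1"
    moreover have "1 \<le> k" using ks k by blast
    ultimately have "2 dvd (2::nat) ^ (k - 1)" by (simp add: dvd_power)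
    moreover have "nsmul 2 x = 0" using x(1) by (simp add: nsmul_two)
    ultimately show False using x(2) nsmul_eq_0_dvd by blast
  qed
  then have "ks = replicate (length ks) 1" by (simp add: replicate_length_same)
  then have "map (\<lambda>k. 2 ^ k) ks = replicate (length ks) (2::nat)"
    by (metis map_replicate power_one_right)
  then have "is_basis gs (replicate (length ks) 2) ?T" using B by simp
  then show ?thesis by blast
qed

lemma cyclic_subgroup_order_three:
  assumes h: "h \<noteq> 0" "h + h + h = (0::'a::ab_group_add)"
  shows "cyclic_subgroup h = {0, h, h + h}" "is_basis [h] [3] (cyclic_subgroup h)"
proof -
  have n3: "nsmul 3 h = 0" using h(2) by (simp add: numeral_3_eq_3 add.assoc)
  have "h + h \<noteq> 0"
  proof
    assume "h + h = 0"
    then have "h + h + h = h" by simp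
    then show False using h by simp
  qed
  have "nsmul j h \<noteq> 0" if "0 < j" "j < 3" for j
  proof -
    have "j = 1 \<or> j = 2" using that by linarith
    then show ?thesis using h(1) \<open>h + h \<noteq> 0\<close> by (auto simp: nsmul_two)
  qed
  then show "is_basis [h] [3] (cyclic_subgroup h)"
    using n3 by (intro basis_single) auto
  have "nsmul j h \<in> {0, h, h + h}" for j
  proof -
    have "j mod 3 = 0 \<or> j mod 3 = 1 \<or> j mod 3 = 2" by arith
    then show ?thesis using nsmul_mod[OF n3, of j] by (auto simp: nsmul_two)
  qed
  moreover have "{0, h, h + h} \<subseteq> range (\<lambda>j. nsmul j h)"
  proof -
    have "0 = nsmul 0 h" "h = nsmul 1 h" "h + h = nsmul 2 h" by (simp_all add: nsmul_two)
    then show ?thesis by (blast intro: range_eqI)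
  qed
  ultimately show "cyclic_subgroup h = {0, h, h + h}" unfolding cyclic_subgroup_def by blast
qed

lemma elementary_plus_doubles_triple:
  fixes H :: "'a::ab_group_add set"
  assumes h: "h + h + h = 0" and H: "H = {0, h, h + h}" and dbl: "\<forall>u. u + u \<in> H"
  shows "{w. w + w = 0} + H = UNIV"
proof -
  have decomp: "\<exists>a b. u = a + b \<and> a + a = 0 \<and> b \<in> H" for u
  proof -
    consider "u + u = 0" | "u + u = h" | "u + u = h + h" using dbl H by blast
    then show ?thesis
    proof cases
      case 1
      then show ?thesis using H by (intro exI[of _ u] exI[of _ 0]) auto
    next
      case 2
      have "(u + h) + (h + h) = u + (h + h + h)" "(u + h) + (u + h) = (u + u) + (h + h)"
        by (simp_all add: algebra_simps)
      then show ?thesis using H 2 h by (intro exI[of _ "u + h"] exI[of _ "h + h"]) auto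
    next
      case 3
      have "(u + h + h) + h = u + (h + h + h)"
        "(u + h + h) + (u + h + h) = (u + u) + (h + h) + (h + h)"
        by (simp_all add: algebra_simps)
      moreover have "(h + h) + (h + h) + (h + h) = 0"
        using h by (metis add.assoc add.commute add_0)
      ultimately show ?thesis using H 3 h by (intro exI[of _ "u + h + h"] exI[of _ h]) auto
    qed
  qed
  have "u \<in> {w. w + w = 0} + H" for u
  proof -
    obtain a b where "u = a + b" "a \<in> {w. w + w = 0}" "b \<in> H" using decomp by blast
    then show ?thesis by (simp add: set_plus_intro)
  qed
  then show ?thesis by blast
qed

lemma elementary_times_three_if_doubles_triple:
  fixes H :: "'a::{finite,ab_group_add} set"
  assumes "is_doubles_triple H"
  shows "\<exists>n \<phi>. prod_iso (replicate n 2 @ [3]) {0} \<phi> \<and> H = \<phi> ` {replicate n 0 @ [c] | c. c < 3}"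
proof -
  obtain h where h: "h \<noteq> 0" "h + h + h = 0" and H: "H = {0, h, h + h}" and dbl: "\<forall>u. u + u \<in> H"
    using assms unfolding is_doubles_triple_def by blast
  let ?T = "{w::'a. w + w = 0}"
  obtain gs n where BT: "is_basis gs (replicate n 2) ?T" using elementary_subgroup_basis by blast
  have cyc: "cyclic_subgroup h = H" "is_basis [h] [3] H"
    using cyclic_subgroup_order_three[OF h] H by simp_all
  have sgH: "is_subgroup H" using is_subgroup_cyclic_subgroup[of h] cyc(1) by simp
  have hh0: "h + h \<noteq> 0" using h by (auto simp: add.assoc[symmetric])
  have "(h + h) + (h + h) = (h + h + h) + h" by (simp only: add.assoc)
  then have X: "(h + h) + (h + h) = h" using h(2) by simp
  have "x = 0" if x: "x \<in> H" "x + x = 0" for x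
  proof -
    from x(1) consider "x = 0" | "x = h" | "x = h + h" unfolding H by blast
    then show ?thesis
    proof cases
      case 3
      then have "x + x = h" by (simp only: X)
      then show ?thesis using x(2) h(1) by simp
    qed (use x(2) hh0 in simp_all)
  qed
  moreover have "0 \<in> H" using H by simp
  ultimately have "?T \<inter> H = {0}" by (intro equalityI subsetI) auto
  then have B: "is_basis (gs @ [h]) (replicate n 2 @ [3]) (?T + H)"
    using basis_append[OF BT cyc(2) is_subgroup_elementary sgH] by simp
  have TH: "?T + H = UNIV" using elementary_plus_doubles_triple[OF h(2) H dbl] .
  have "prod_iso (replicate n 2 @ [3]) {0} (lincomb (gs @ [h]))"
    using prod_iso_of_basis[OF B is_subgroup_set_plus[OF is_subgroup_elementary sgH] is_subgroup_zero]
    unfolding TH by simp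
  moreover have "lincomb (gs @ [h]) (replicate n 0 @ [c]) = nsmul c h" for c
    using lincomb_append[of "replicate n 0" gs "[h]" "[c]"] lincomb_replicate_0[of gs n] BT
    unfolding is_basis_def by (simp add: lincomb_single)
  moreover have "{replicate n 0 @ [c] | c. c < 3} = (\<lambda>c. replicate n 0 @ [c]) ` {0, 1, 2::nat}"
    by (auto simp: less_Suc_eq numeral_3_eq_3)
  ultimately have "prod_iso (replicate n 2 @ [3]) {0} (lincomb (gs @ [h]))"
    "H = lincomb (gs @ [h]) ` {replicate n 0 @ [c] | c. c < 3}"
    unfolding H by (simp_all add: nsmul_two)
  then show ?thesis by blast
qed

lemma double_mod_two_power:
  assumes "x < (2::nat) ^ k" "1 \<le> k" "(x + x) mod 2 ^ k = 0"
  shows "x = 0 \<or> x = 2 ^ (k - 1)"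
proof -
  obtain q where q: "x + x = 2 ^ k * q" using assms(3) by (metis mod_eq_0_iff_dvd dvdE)
  have k: "(2::nat) ^ k = 2 * 2 ^ (k - 1)" using assms(2) by (cases k) simp_all
  have "2 ^ k * q < 2 ^ k * 2" using q assms(1) by linarith
  then have "q < 2" by simp
  then consider "q = 0" | "q = 1" by linarith
  then show ?thesis using q k by cases simp_all
qed

lemma zadd_halves:
  assumes a: "a \<in> zvecs ms" and even: "\<forall>i<length ms. even (a ! i)"
  shows "map (\<lambda>x. x div 2) a \<in> zvecs ms" "zadd ms (map (\<lambda>x. x div 2) a) (map (\<lambda>x. x div 2) a) = a"
proof -
  have len: "length a = length ms" using length_zvecs[OF a] .
  have "a ! i div 2 < ms ! i" if "i < length ms" for i
    using nth_zvecs_less[OF a that] by (meson div_le_dividend le_less_trans)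
  then show "map (\<lambda>x. x div 2) a \<in> zvecs ms" unfolding zvecs_def using len by simp
  show "zadd ms (map (\<lambda>x. x div 2) a) (map (\<lambda>x. x div 2) a) = a"
  proof (rule nth_equalityI)
    fix i assume "i < length (zadd ms (map (\<lambda>x. x div 2) a) (map (\<lambda>x. x div 2) a))"
    then have i: "i < length ms" by simp
    have "even (a ! i)" using even i by blast
    then have "a ! i div 2 + a ! i div 2 = a ! i" by (simp flip: mult_2)
    then show "zadd ms (map (\<lambda>x. x div 2) a) (map (\<lambda>x. x div 2) a) ! i = a ! i"
      using i len nth_zvecs_less[OF a i] by (simp add: zadd_nth)
  qed (simp add: len)
qed

lemma sorted_ones_prefix:
  assumes "sorted ks" "\<forall>k\<in>set ks. 1 \<le> (k::nat)"
  shows "\<exists>n ks'. ks = replicate n 1 @ ks' \<and> (\<forall>k\<in>set ks'. 2 \<le> k)"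
  using assms
proof (induction ks)
  case (Cons k ks)
  show ?case
  proof (cases "k = 1")
    case True
    then obtain n ks' where "ks = replicate n 1 @ ks'" "\<forall>k\<in>set ks'. 2 \<le> k"
      using Cons by auto
    then show ?thesis using True by (intro exI[of _ "Suc n"] exI[of _ ks']) simp
  next
    case False
    then have "2 \<le> k" using Cons.prems(2) by auto
    moreover have "\<forall>k'\<in>set ks. k \<le> k'" using Cons.prems(1) by simp
    ultimately have "\<forall>k'\<in>set (k # ks). 2 \<le> k'" by auto
    then show ?thesis by (intro exI[of _ 0] exI[of _ "k # ks"]) simp
  qed
qed simp

lemma basis_coords_of_order_two:
  assumes B: "is_basis gs (map (\<lambda>k. 2 ^ k) ks) G" and ks: "\<forall>k\<in>set ks. 1 \<le> k"
    and a: "a \<in> zvecs (map (\<lambda>k. 2 ^ k) ks)" "lincomb gs a + lincomb gs a = 0"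
    and i: "i < length ks"
  shows "a ! i = 0 \<or> a ! i = 2 ^ (ks ! i - 1)"
proof -
  let ?ms = "map (\<lambda>k. (2::nat) ^ k) ks"
  have ms: "\<forall>m\<in>set ?ms. 0 < m" by auto
  have lg: "length gs = length ?ms" "\<forall>i<length ?ms. nsmul (?ms ! i) (gs ! i) = 0"
    using B unfolding is_basis_def by auto
  have "lincomb gs (zadd ?ms a a) = lincomb gs (replicate (length ?ms) 0)"
    using lincomb_zadd[OF lg] a(2) lincomb_replicate_0[of gs "length ?ms"] lg(1) by simp
  then have "zadd ?ms a a = replicate (length ?ms) 0"
    using basis_inj[OF B zadd_in_zvecs[OF ms] replicate_0_in_zvecs[OF ms]] by blast
  then have m0: "(a ! i + a ! i) mod 2 ^ (ks ! i) = 0"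
    using i zadd_nth[of i ?ms a a] by simp
  have lt: "a ! i < 2 ^ (ks ! i)" using nth_zvecs_less[OF a(1), of i] i by simp
  have k1: "1 \<le> ks ! i" using ks i by simp
  show ?thesis using double_mod_two_power[OF lt k1 m0] .
qed

text \<open>Otherwise every coordinate of \<open>a\<close> is even, and halving them exhibits \<open>lincomb gs a\<close> as a double.\<close>

lemma unit_coordinate_if_not_double:
  assumes B: "is_basis gs (map (\<lambda>k. 2 ^ k) ks) G" and ks: "\<forall>k\<in>set ks. 1 \<le> k"
    and a: "a \<in> zvecs (map (\<lambda>k. 2 ^ k) ks)" "lincomb gs a + lincomb gs a = 0"
    and nd: "\<forall>v. v + v \<noteq> lincomb gs a"
  shows "\<exists>i<length ks. ks ! i = 1 \<and> a ! i = 1"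
proof (rule ccontr)
  let ?ms = "map (\<lambda>k. (2::nat) ^ k) ks"
  assume no: "\<not> (\<exists>i<length ks. ks ! i = 1 \<and> a ! i = 1)"
  have "even (a ! i)" if i: "i < length ?ms" for i
  proof -
    have a_i: "a ! i = 0 \<or> a ! i = 2 ^ (ks ! i - 1)"
      using basis_coords_of_order_two[OF B ks a] i by simp
    have "1 \<le> ks ! i" using ks i by simp
    then consider "ks ! i = 1" | "2 \<le> ks ! i" by linarith
    then show ?thesis
    proof cases
      case 1
      then show ?thesis using a_i no i by auto
    next
      case 2
      then have "even ((2::nat) ^ (ks ! i - 1))" by simp
      then show ?thesis using a_i by auto
    qed
  qed
  then have "lincomb gs a = lincomb gs (map (\<lambda>x. x div 2) a) + lincomb gs (map (\<lambda>x. x div 2) a)"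
    using zadd_halves[OF a(1)] lincomb_zadd[of gs ?ms] B unfolding is_basis_def by metis
  then show False using nd by metis
qed

lemma two_part_basis:
  obtains gs n ks where "is_basis gs (map (\<lambda>k. 2 ^ k) (replicate n 1 @ ks)) (two_part :: 'a::{finite,ab_group_add} set)"
    "\<forall>k\<in>set ks. 2 \<le> k"
proof -
  have "\<forall>x\<in>two_part. \<exists>e. nsmul (2 ^ e) (x::'a) = 0" unfolding two_part_def by blast
  then obtain gs ks0 where B: "is_basis gs (map (\<lambda>k. 2 ^ k) ks0) (two_part :: 'a set)"
    and "sorted ks0" and "\<forall>k\<in>set ks0. 1 \<le> k"
    using two_group_basis[OF is_subgroup_two_part] by blast
  then obtain n ks where "ks0 = replicate n 1 @ ks" "\<forall>k\<in>set ks. 2 \<le> k"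
    using sorted_ones_prefix by blast
  then show ?thesis using that B by blast
qed

lemma coords_of_nondouble_involution:
  assumes B: "is_basis gs (map (\<lambda>k. 2 ^ k) (replicate n 1 @ ks)) G" and ks: "\<forall>k\<in>set ks. 2 \<le> k"
    and a: "a \<in> zvecs (map (\<lambda>k. 2 ^ k) (replicate n 1 @ ks))" "lincomb gs a + lincomb gs a = 0"
    and nd: "\<forall>v. v + v \<noteq> lincomb gs a"
  shows "1 \<in> set (take n a)" "set (take n a) \<subseteq> {0, 1}"
    "\<forall>j<length ks. drop n a ! j \<in> {0, 2 ^ (ks ! j - 1)}"
proof -
  define ks0 where "ks0 = replicate n 1 @ ks"
  have k1: "\<forall>k\<in>set ks0. 1 \<le> k" using ks unfolding ks0_def by auto
  have len: "length a = n + length ks" using length_zvecs[OF a(1)] by simp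
  obtain i where i: "i < length ks0" "ks0 ! i = 1" "a ! i = 1"
    using unit_coordinate_if_not_double[OF B[folded ks0_def] k1 a(1)[folded ks0_def] a(2) nd] by blast
  have "i < n"
  proof (rule ccontr)
    assume "\<not> i < n"
    then have "ks0 ! i \<in> set ks" using i(1) unfolding ks0_def by (simp add: nth_append)
    then have "2 \<le> ks0 ! i" using ks by blast
    then show False using i(2) by simp
  qed
  then have "take n a ! i = 1" "i < length (take n a)" using i(3) len by simp_all
  then show "1 \<in> set (take n a)" by (metis nth_mem)
  have "map (\<lambda>k. 2 ^ k) (replicate n 1 @ ks) = replicate n 2 @ map (\<lambda>k. (2::nat) ^ k) ks" by simp
  then have "take n a \<in> zvecs (replicate n 2)"
    using a(1) append_in_zvecs_iff[of "take n a" "replicate n 2" "drop n a"] len by simp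
  then show "set (take n a) \<subseteq> {0, 1}" by (simp add: zvecs_replicate_two)
  show "\<forall>j<length ks. drop n a ! j \<in> {0, 2 ^ (ks ! j - 1)}"
  proof (intro allI impI)
    fix j assume j: "j < length ks"
    have "a ! (n + j) = 0 \<or> a ! (n + j) = 2 ^ (ks0 ! (n + j) - 1)"
      using basis_coords_of_order_two[OF B[folded ks0_def] k1 a(1)[folded ks0_def] a(2)] j
      unfolding ks0_def by simp
    then show "drop n a ! j \<in> {0, 2 ^ (ks ! j - 1)}" using len unfolding ks0_def by (simp add: nth_append)
  qed
qed

lemma elementary_cases_if_nondouble_pair:
  fixes H :: "'a::{finite,ab_group_add} set"
  assumes H: "is_subgroup H" and pair: "is_nondouble_pair H"
  shows "elementary_odd_form H \<or> elementary_cyclic_odd_form H"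
proof -
  obtain h where h: "h \<noteq> 0" "H = {0, h}" "\<forall>v. v + v \<noteq> h"
    using pair unfolding is_nondouble_pair_def by blast
  have hh: "h + h = 0" using H h(1,2) unfolding is_subgroup_def by auto
  have "h \<in> two_part" unfolding two_part_def using hh by (intro CollectI exI[of _ 1]) (simp add: nsmul_two)
  obtain gs n ks where B: "is_basis gs (map (\<lambda>k. 2 ^ k) (replicate n 1 @ ks)) (two_part :: 'a set)"
    and ks: "\<forall>k\<in>set ks. 2 \<le> k"
    by (rule two_part_basis)
  have p: "prod_iso (replicate n 2 @ map (\<lambda>k. 2 ^ k) ks) odd_part (lincomb gs)"
    using prod_iso_of_basis[OF B is_subgroup_two_part is_subgroup_odd_part two_part_inter_odd_part
        two_part_plus_odd_part] by simp
  obtain a where a: "a \<in> zvecs (map (\<lambda>k. 2 ^ k) (replicate n 1 @ ks))" "h = lincomb gs a"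
    using basis_surj[OF B \<open>h \<in> two_part\<close>] by blast
  then have "lincomb gs a + lincomb gs a = 0" "\<forall>v. v + v \<noteq> lincomb gs a"
    using hh h(3) by simp_all
  note coords = coords_of_nondouble_involution[OF B ks a(1) this]
  have len: "length (take n a) = n" "length (drop n a) = length ks"
    using length_zvecs[OF a(1)] by simp_all
  have "n \<ge> 1" using coords(1) by (cases n) simp_all
  have H': "H = {0, lincomb gs (take n a @ drop n a)}" using h(2) a(2) by simp
  show ?thesis
  proof (cases "ks = []")
    case True
    then have "elementary_odd_form H"
      unfolding elementary_odd_form_def using p odd_card_odd_part \<open>n \<ge> 1\<close> h(1,2) by auto
    then show ?thesis ..
  next
    case False
    have "\<exists>x z. length x = n \<and> set x \<subseteq> {0, 1} \<and> 1 \<in> set x \<and> length z = length ks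
        \<and> (\<forall>j<length ks. z ! j \<in> {0, 2 ^ (ks ! j - 1)}) \<and> H = {0, lincomb gs (x @ z)}"
      using coords len H' by blast
    then have "elementary_cyclic_odd_form H"
      unfolding elementary_cyclic_odd_form_def using p odd_card_odd_part \<open>n \<ge> 1\<close> False ks by blast
    then show ?thesis ..
  qed
qed

lemma nondouble_pair_if_elementary_cyclic_odd_form:
  assumes "elementary_cyclic_odd_form H"
  shows "is_nondouble_pair H"
proof -
  obtain n ks Q \<phi> x z where p: "prod_iso (replicate n 2 @ map (\<lambda>k. 2 ^ k) ks) Q \<phi>"
    and ks: "\<forall>k\<in>set ks. k \<ge> 2"
    and x: "length x = n" "set x \<subseteq> {0, 1}" "1 \<in> set x"
    and z: "length z = length ks" "\<forall>j<length ks. z ! j \<in> {0, 2 ^ (ks ! j - 1)}"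
    and H: "H = {0, \<phi> (x @ z)}"
    using assms unfolding elementary_cyclic_odd_form_def by blast
  let ?ms = "replicate n 2 @ map (\<lambda>k. (2::nat) ^ k) ks"
  have "x \<in> zvecs (replicate n 2)" using x(1,2) by (simp add: zvecs_replicate_two)
  moreover have "z \<in> zvecs (map (\<lambda>k. 2 ^ k) ks)"
  proof -
    have "z ! j < 2 ^ (ks ! j)" if "j < length ks" for j
      using z(2) that ks nth_mem[OF that] by fastforce
    then show ?thesis unfolding zvecs_def using z(1) by simp
  qed
  ultimately have "x @ z \<in> zvecs ?ms" using x(1) append_in_zvecs_iff[of x] by simp
  moreover obtain l where "l < n" "x ! l = 1" using x(1,3) by (metis in_set_conv_nth)
  ultimately show ?thesis
    using nondouble_pair_if_unit_coordinate[OF p, of "x @ z" l] x(1) H by (simp add: nth_append)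
qed

lemma nondouble_pair_iff_forms:
  assumes "is_subgroup (H::'a::{finite,ab_group_add} set)"
  shows "is_nondouble_pair H \<longleftrightarrow> elementary_odd_form H \<or> elementary_cyclic_odd_form H"
proof
  assume "elementary_odd_form H \<or> elementary_cyclic_odd_form H"
  then show "is_nondouble_pair H"
  proof
    assume "elementary_odd_form H"
    then obtain n and Q :: "'a set" and \<phi> where "prod_iso (replicate n 2) Q \<phi>" "odd (card Q)" "card H = 2"
      unfolding elementary_odd_form_def by blast
    then show ?thesis by (rule nondouble_pair_if_elementary_times_odd[OF assms])
  qed (rule nondouble_pair_if_elementary_cyclic_odd_form)
qed (rule elementary_cases_if_nondouble_pair[OF assms])

lemma doubles_triple_iff_form:
  "is_doubles_triple (H::'a::{finite,ab_group_add} set) \<longleftrightarrow> elementary_three_form H"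
proof
  assume "elementary_three_form H"
  then obtain n \<phi> where "prod_iso (replicate n 2 @ [3]) {0} \<phi>" "H = \<phi> ` {replicate n 0 @ [c] | c. c < 3}"
    unfolding elementary_three_form_def by blast
  then show "is_doubles_triple H" by (rule doubles_triple_if_elementary_times_three)
qed (unfold elementary_three_form_def, rule elementary_times_three_if_doubles_triple)

theorem theorem5p4:
  fixes H :: "'a::{finite, ab_group_add} set"
  assumes "is_subgroup H"
  shows "(\<exists>C. total_perfect_code H C) \<longleftrightarrow>
    ((\<exists>n\<ge>1. \<exists>(Q::'a set) \<phi>. prod_iso (replicate n 2) Q \<phi> \<and> odd (card Q) \<and> card H = 2)
   \<or> (\<exists>n ks Q \<phi>. n \<ge> 1 \<and> ks \<noteq> [] \<and> (\<forall>k\<in>set ks. k \<ge> 2)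
        \<and> prod_iso (replicate n 2 @ map (\<lambda>k. 2 ^ k) ks) Q \<phi> \<and> odd (card Q)
        \<and> (\<exists>x z. length x = n \<and> set x \<subseteq> {0, 1} \<and> 1 \<in> set x
              \<and> length z = length ks \<and> (\<forall>j<length ks. z ! j \<in> {0, 2 ^ (ks ! j - 1)})
              \<and> H = {0, \<phi> (x @ z)}))
   \<or> (\<exists>n \<phi>. prod_iso (replicate n 2 @ [3]) {0} \<phi>
        \<and> H = \<phi> ` {replicate n 0 @ [c] | c. c < 3}))"
proof -
  have "(\<exists>C. total_perfect_code H C) \<longleftrightarrow>
      (elementary_odd_form H \<or> elementary_cyclic_odd_form H) \<or> elementary_three_form H"
    by (simp only: ex_total_perfect_code_iff[OF assms] nondouble_pair_iff_forms[OF assms]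
        doubles_triple_iff_form)
  then show ?thesis
    unfolding elementary_odd_form_def elementary_cyclic_odd_form_def elementary_three_form_def
    by (simp only: disj_assoc)
qed

end
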